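(* Fix $i,j\in I$ with $\tau(i)=i\neq j$, and for $m,n\in\mathbb{N}$ let $w_{m,n}(x,y)\in\mathbb{K}[x,y]$ be the unique polynomial with $F_i^mF_jF_i^n=\sum_{r,s}b_{rs}F_i^{\circledast r}\circledast F_j\circledast F_i^{\circledast s}$ in $\mathcal{A}$, where $w_{m,n}(x,y)=\sum_{r,s}b_{rs}x^ry^s$. Then $$w_{m,n}(x,y)=\frac{H_{m,n}(b_ix,b_iy;q_i^2,q_i^{a_{ij}})}{(2b_i)^{m+n}},$$ where $b_i=\tfrac12(q_i-q_i^{-1})c_i^{-1/2}q_i^{-1/2}$ (in a quadratic extension of $\mathbb{K}$; the right-hand side depends only on $b_i^2=\frac{(q_i-q_i^{-1})^2}{4c_iq_i}$ and lies in $\mathbb{K}[x,y]$).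
   Context: Let $I$ be a finite set and $(a_{kl})_{k,l\in I}$ a symmetrizable generalized Cartan matrix, with relatively prime positive integers $d_k$ such that $(d_ka_{kl})$ is symmetric. Let $Q=\bigoplus_{k\in I}\mathbb{Z}\alpha_k$ with $(\alpha_k,\alpha_l)=d_ka_{kl}$, $Q^+=\bigoplus_k\mathbb{N}\alpha_k$. Let $\mathbb{K}$ be a field of characteristic zero, $q\in\mathbb{K}^\times$ with $q^{2d_k}\neq1$ for all $k$, $q_k=q^{d_k}$. Let $\tau:I\to I$ be a bijection with $\tau^2=\mathrm{id}$ and $a_{\tau(k)\tau(l)}=a_{kl}$, and $(c_k)\in(\mathbb{K}^\times)^I$ with $c_k=c_{\tau(k)}$ whenever $a_{k\tau(k)}=0$. Let $T(V^-)=\mathbb{K}\langle F_k:k\in I\rangle$ be the free algebra graded by $-Q^+$ ($\deg F_k=-\alpha_k$), with linear maps $\partial_k^L,\partial_k^R$ defined by $\partial_k^{L}(F_l)=\partial_k^R(F_l)=\delta_{kl}$, $\partial^{L}_k(1)=\partial^R_k(1)=0$ and, for $f$ of degree $-\mu$, $g$ of degree $-\nu$: $\partial_k^R(fg)=q^{(\alpha_k,\nu)}\partial_k^R(f)g+f\partial_k^R(g)$, $\partial_k^L(fg)=\partial_k^L(f)g+q^{(\alpha_k,\mu)}f\partial_k^L(g)$. Let $G_\theta\subseteq Q$ be generated by $\alpha_k-\alpha_{\tau(k)}$, and $\mathcal{A}$ the $\mathbb{K}$-algebra generated by $T(V^-)$ and $K_\mu$ ($\mu\in G_\theta$) with $K_0=1$,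 $K_\mu K_\nu=K_{\mu+\nu}$, $K_\mu F_k=q^{-(\mu,\alpha_k)}F_kK_\mu$; $K_{\tau(k)}K_k^{-1}:=K_{\alpha_{\tau(k)}-\alpha_k}$, $H_\theta=\mathrm{span}\{K_\mu\}$. By earlier work there is a unique associative product $\circledast$ on $\mathcal{A}$ with $h\circledast g=hg$, $g\circledast h=gh$ ($h\in H_\theta$, $g\in T(V^-)$) and $F_k\circledast g=F_kg-\frac{c_kq^{(\alpha_k,\alpha_{\tau(k)})}}{q_k-q_k^{-1}}K_{\tau(k)}K_k^{-1}\partial^L_{\tau(k)}(g)$. Bivariate continuous $p$-Hermite polynomials: $H_n(x;p)$ is defined by $H_{-1}=0$, $H_0=1$, $H_{n+1}=2xH_n-(1-p^n)H_{n-1}$; $H_{m,n}(x,y;p,r)$ is defined by $H_{-1,n}=H_{m,-1}=0$, $H_{0,n}(x,y;p,r)=H_n(y;p)$, and $H_{m+1,n}=2xH_{m,n}-(1-p^m)H_{m-1,n}-p^m(1-p^n)rH_{m,n-1}$ for $m,n\ge0$. *)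

theory Defs
  imports "HOL-Computational_Algebra.Polynomial"
begin

text \<open>Q = Z^I is represented as functions 'i => int; alpha_k is the indicator of k.\<close>

definition sroot :: "'i \<Rightarrow> 'i \<Rightarrow> int" where
  "sroot k = (\<lambda>l. if l = k then 1 else 0)"

definition bform :: "('i::finite \<Rightarrow> 'i \<Rightarrow> int) \<Rightarrow> ('i \<Rightarrow> nat) \<Rightarrow> ('i \<Rightarrow> int) \<Rightarrow> ('i \<Rightarrow> int) \<Rightarrow> int" where
  "bform a d mu nu = (\<Sum>k\<in>UNIV. \<Sum>l\<in>UNIV. mu k * nu l * int (d k) * a k l)"

text \<open>Weight (minus the degree) of a word F_{l1}...F_{ln}.\<close>
definition wt :: "'i list \<Rightarrow> 'i \<Rightarrow> int" where
  "wt w = (\<lambda>l. int (count_list w l))"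

definition is_GCM :: "('i::finite \<Rightarrow> 'i \<Rightarrow> int) \<Rightarrow> bool" where
  "is_GCM a \<longleftrightarrow> (\<forall>k. a k k = 2) \<and> (\<forall>k l. k \<noteq> l \<longrightarrow> a k l \<le> 0)
     \<and> (\<forall>k l. a k l = 0 \<longleftrightarrow> a l k = 0)"

text \<open>An element of T(V^-) is given by its coefficient function on words
  (the word [l1,...,ln] stands for F_{l1} ... F_{ln}).\<close>

definition Fmul :: "'i \<Rightarrow> ('i list \<Rightarrow> 'k::field) \<Rightarrow> 'i list \<Rightarrow> 'k" where
  "Fmul k g w = (case w of [] \<Rightarrow> 0 | l # w' \<Rightarrow> if l = k then g w' else 0)"

definition dL :: "('i::finite \<Rightarrow> 'i \<Rightarrow> int) \<Rightarrow> ('i \<Rightarrow> nat) \<Rightarrow> 'k::field \<Rightarrow> 'i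
    \<Rightarrow> ('i list \<Rightarrow> 'k) \<Rightarrow> 'i list \<Rightarrow> 'k" where
  "dL a d q k g w = (\<Sum>p\<le>length w. q powi (bform a d (sroot k) (wt (take p w)))
                        * g (take p w @ k # drop p w))"

text \<open>An element sum_mu K_mu g_mu of A is given by the function mu |-> g_mu
  (mu ranges over Q; only mu in G_theta occur for the elements considered).\<close>

definition basisA :: "('i \<Rightarrow> int) \<Rightarrow> 'i list \<Rightarrow> ('i \<Rightarrow> int) \<Rightarrow> 'i list \<Rightarrow> 'k::field" where
  "basisA mu w = (\<lambda>nu u. if nu = mu \<and> u = w then 1 else 0)"

definition oneA :: "('i \<Rightarrow> int) \<Rightarrow> 'i list \<Rightarrow> 'k::field" where
  "oneA = basisA (\<lambda>_. 0) []"

text \<open>Left circledast-multiplication by F_k: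
  F_k (*) (K_mu g) = q^{(mu,alpha_k)} K_mu (F_k g
      - c_k q^{(alpha_k,alpha_tau k)}/(q_k - q_k^{-1}) K_{alpha_{tau k}-alpha_k} partial^L_{tau k}(g)).\<close>
definition starF :: "('i::finite \<Rightarrow> 'i \<Rightarrow> int) \<Rightarrow> ('i \<Rightarrow> nat) \<Rightarrow> 'k::field \<Rightarrow> ('i \<Rightarrow> 'k)
    \<Rightarrow> ('i \<Rightarrow> 'i) \<Rightarrow> 'i \<Rightarrow> (('i \<Rightarrow> int) \<Rightarrow> 'i list \<Rightarrow> 'k) \<Rightarrow> ('i \<Rightarrow> int) \<Rightarrow> 'i list \<Rightarrow> 'k" where
  "starF a d q c \<tau> k X = (\<lambda>nu u.
      let qk = q ^ d k;
          C = c k * q powi (bform a d (sroot k) (sroot (\<tau> k))) / (qk - inverse qk);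
          mu' = nu - (sroot (\<tau> k) - sroot k)
      in q powi (bform a d nu (sroot k)) * Fmul k (X nu) u
         - C * q powi (bform a d mu' (sroot k)) * dL a d q (\<tau> k) (X mu') u)"

text \<open>F_i^{(*)r} (*) F_j (*) F_i^{(*)s}, computed by associativity as iterated left
  multiplication applied to 1.\<close>
definition starWord :: "('i::finite \<Rightarrow> 'i \<Rightarrow> int) \<Rightarrow> ('i \<Rightarrow> nat) \<Rightarrow> 'k::field \<Rightarrow> ('i \<Rightarrow> 'k)
    \<Rightarrow> ('i \<Rightarrow> 'i) \<Rightarrow> 'i \<Rightarrow> 'i \<Rightarrow> nat \<Rightarrow> nat \<Rightarrow> ('i \<Rightarrow> int) \<Rightarrow> 'i list \<Rightarrow> 'k" where
  "starWord a d q c \<tau> i j r s =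
     (starF a d q c \<tau> i ^^ r) (starF a d q c \<tau> j ((starF a d q c \<tau> i ^^ s) oneA))"

text \<open>For w = sum_{r,s} b_{rs} x^r y^s (outer variable x, inner variable y), the element
  sum_{r,s} b_{rs} F_i^{(*)r} (*) F_j (*) F_i^{(*)s} of A.\<close>
definition expandA :: "('i::finite \<Rightarrow> 'i \<Rightarrow> int) \<Rightarrow> ('i \<Rightarrow> nat) \<Rightarrow> 'k::field \<Rightarrow> ('i \<Rightarrow> 'k)
    \<Rightarrow> ('i \<Rightarrow> 'i) \<Rightarrow> 'i \<Rightarrow> 'i \<Rightarrow> 'k poly poly \<Rightarrow> ('i \<Rightarrow> int) \<Rightarrow> 'i list \<Rightarrow> 'k" where
  "expandA a d q c \<tau> i j w = (\<lambda>nu u.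
     \<Sum>r\<le>degree w. \<Sum>s\<le>degree (coeff w r).
        coeff (coeff w r) s * starWord a d q c \<tau> i j r s nu u)"

fun Hpoly :: "'a::comm_ring_1 \<Rightarrow> nat \<Rightarrow> 'a poly" where
  "Hpoly p 0 = 1"
| "Hpoly p (Suc 0) = [:0, 2:] * Hpoly p 0"
| "Hpoly p (Suc (Suc n)) = [:0, 2:] * Hpoly p (Suc n) - smult (1 - p ^ Suc n) (Hpoly p n)"

text \<open>Bivariate H_{m,n}(x,y;p,r) as a polynomial in x with coefficients in K[y].
  H_{-1,n} = H_{m,-1} = 0 is handled by the case distinctions.\<close>
fun Hbiv :: "'a::comm_ring_1 \<Rightarrow> 'a \<Rightarrow> nat \<Rightarrow> nat \<Rightarrow> 'a poly poly" where
  "Hbiv p r 0 n = [: Hpoly p n :]"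
| "Hbiv p r (Suc m) n =
     [:0, [:2:]:] * Hbiv p r m n
     - smult [: 1 - p ^ m :] (case m of 0 \<Rightarrow> 0 | Suc m' \<Rightarrow> Hbiv p r m' n)
     - smult [: p ^ m * (1 - p ^ n) * r :] (case n of 0 \<Rightarrow> 0 | Suc n' \<Rightarrow> Hbiv p r m n')"

end

theory Submission
  imports Defs
begin

(* Write e(x,y) for the word F_i^x F_j F_i^y, Q = q_i^2, R = q_i^(a_ij) and
   [n] = 1 + Q + ... + Q^(n-1). Left circledast-multiplication by F_i maps e(x,y) to
     e(x+1,y) - C ([x] e(x-1,y) + Q^x R [y] e(x,y-1)),
   the correction coming from the skew derivation dL_i. Read backwards, this is a three-term
   recursion for the polynomials w_(m,n); since 4 b_i^2 C = Q - 1, rescaling x and y by 2 b_i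
   turns it into the recursion defining H_(m,n). Uniqueness holds because the circledast-product
   F_i^r F_j F_i^s equals e(r,s) modulo shorter words. *)

section \<open>Weights and words\<close>

lemma bform_sroot_wt: "bform a d (sroot k) (wt w) = (\<Sum>x\<leftarrow>w. int (d k) * a k x)"
proof -
  have "bform a d (sroot k) nu = (\<Sum>l\<in>UNIV. nu l * int (d k) * a k l)" for nu
  proof -
    have "bform a d (sroot k) nu
        = (\<Sum>k'\<in>UNIV. if k' = k then (\<Sum>l\<in>UNIV. nu l * int (d k) * a k l) else 0)"
      unfolding bform_def sroot_def by (rule sum.cong) auto
    then show ?thesis by simp
  qed
  moreover have "(\<Sum>l\<in>UNIV. wt w l * int (d k) * a k l) = (\<Sum>x\<leftarrow>w. int (d k) * a k x)"
  proof (induction w)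
    case (Cons x w)
    have "(\<Sum>l\<in>UNIV. wt (x # w) l * int (d k) * a k l)
        = (\<Sum>l\<in>UNIV. (if l = x then int (d k) * a k l else 0) + wt w l * int (d k) * a k l)"
      by (rule sum.cong) (auto simp: wt_def algebra_simps)
    with Cons.IH show ?case by (simp add: sum.distrib)
  qed (simp add: wt_def)
  ultimately show ?thesis by simp
qed

lemma sroot_eq_wt: "sroot k = wt [k]"
  by (simp add: sroot_def wt_def fun_eq_iff)

lemma set_insert_at: "set (take p u @ x # drop p u) = insert x (set u)"
  by (metis append_take_drop_id Un_insert_right list.set(2) set_append)

lemma count_list_insert_at:
  "count_list (take p u @ x # drop p u) y = count_list u y + (if x = y then 1 else 0)"
proof -
  have "count_list u y = count_list (take p u) y + count_list (drop p u) y"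
    by (metis append_take_drop_id count_list_append)
  then show ?thesis by simp
qed

lemma replicate_insert_at: "p \<le> b \<Longrightarrow> replicate p z @ z # replicate (b - p) z = replicate (Suc b) z"
  by (simp flip: replicate_add replicate_Suc)

lemma sum_atMost_add_Suc: "(\<Sum>p\<le>x + Suc y. F p) = (\<Sum>p\<le>x. F p) + (\<Sum>t\<le>y. F (Suc x + t))"
  by (induction y) (simp_all add: algebra_simps)

lemma dL_eq_0: "(\<And>p. g (take p u @ k # drop p u) = 0) \<Longrightarrow> dL a d q k g u = 0"
  by (simp add: dL_def)

lemma Fmul_Nil [simp]: "Fmul k g [] = 0"
  by (simp add: Fmul_def)

lemma Fmul_Cons [simp]: "Fmul k g (l # w) = (if l = k then g w else 0)"
  by (simp add: Fmul_def)

lemma bform_zero [simp]: "bform a d (\<lambda>_. 0) nu = 0"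
  by (simp add: bform_def)

locale ij_setting =
  fixes a :: "'i::finite \<Rightarrow> 'i \<Rightarrow> int" and d :: "'i \<Rightarrow> nat" and q :: "'k::field"
    and c :: "'i \<Rightarrow> 'k" and \<tau> :: "'i \<Rightarrow> 'i" and i j :: 'i
  assumes a_ii: "a i i = 2" and tau_i: "\<tau> i = i" and ij: "i \<noteq> j" and tau_j: "\<tau> j \<noteq> i"
    and q_nz: "q \<noteq> 0"
begin

definition Q :: 'k where "Q = q ^ (2 * d i)"
definition R :: 'k where "R = q powi (int (d i) * a i j)"
(* The coefficient of dL_i in F_i (circledast) g; its K-factor is K_0 = 1 because tau i = i. *)
definition C :: 'k where "C = c i * Q / (q ^ d i - inverse (q ^ d i))"
definition qint :: "nat \<Rightarrow> 'k" where "qint n = (\<Sum>p<n. Q ^ p)"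

abbreviation ijword :: "nat \<Rightarrow> nat \<Rightarrow> 'i list" where
  "ijword x y \<equiv> replicate x i @ j # replicate y i"

definition is_ijword :: "'i list \<Rightarrow> bool" where
  "is_ijword u \<longleftrightarrow> set u \<subseteq> {i, j} \<and> count_list u j = 1"

lemma is_ijword_Cons_i: "is_ijword (i # u) \<longleftrightarrow> is_ijword u"
  using ij by (auto simp: is_ijword_def)

lemma is_ijword_insert_i: "is_ijword (take p u @ i # drop p u) \<longleftrightarrow> is_ijword u"
  using ij by (simp only: is_ijword_def set_insert_at count_list_insert_at) simp

lemma is_ijword_iff: "is_ijword u \<longleftrightarrow> (\<exists>x y. u = ijword x y)"
proof
  show "is_ijword u \<Longrightarrow> \<exists>x y. u = ijword x y"
  proof (induction u)
    case (Cons z u)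
    show ?case
    proof (cases "z = j")
      case True
      with Cons.prems have "set u \<subseteq> {i}"
        by (auto simp: is_ijword_def count_list_0_iff)
      then have "u = replicate (length u) i"
        by (simp add: replicate_length_same subset_iff)
      with True show ?thesis by (metis append_Nil replicate_0)
    next
      case False
      with Cons.prems have "z = i" "is_ijword u" by (auto simp: is_ijword_def)
      with Cons.IH obtain x y where "u = ijword x y" by blast
      with \<open>z = i\<close> show ?thesis by (metis append_Cons replicate_Suc)
    qed
  qed (simp add: is_ijword_def)
  show "\<exists>x y. u = ijword x y \<Longrightarrow> is_ijword u"
    using ij by (auto simp: is_ijword_def)
qed

lemma ijword_eq_iff: "ijword x y = ijword x' y' \<longleftrightarrow> x = x' \<and> y = y'"
proof
  assume eq: "ijword x y = ijword x' y'"
  have "takeWhile (\<lambda>z. z \<noteq> j) (ijword x y) = replicate x i" for x y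
    using ij by (subst takeWhile_append2) auto
  with eq have "x = x'" by (metis length_replicate)
  with eq show "x = x' \<and> y = y'" by simp
qed simp

lemma q_powi_wt_replicate: "q powi bform a d (sroot i) (wt (replicate p i)) = Q ^ p"
proof -
  have "bform a d (sroot i) (wt (replicate p i)) = int (2 * d i * p)"
    by (simp add: bform_sroot_wt a_ii sum_list_replicate)
  then show ?thesis by (simp only: power_int_of_nat) (simp add: Q_def power_mult)
qed

lemma q_powi_wt_ijword: "q powi bform a d (sroot i) (wt (ijword x y)) = Q ^ x * R * Q ^ y"
proof -
  have "bform a d (sroot i) (wt (ijword x y))
      = int (2 * d i * x) + int (d i) * a i j + int (2 * d i * y)"
    by (simp add: bform_sroot_wt a_ii sum_list_replicate)
  then have "q powi bform a d (sroot i) (wt (ijword x y))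
      = q powi int (2 * d i * x) * q powi (int (d i) * a i j) * q powi int (2 * d i * y)"
    by (simp only: power_int_add[OF disjI1[OF q_nz]])
  then show ?thesis by (simp only: power_int_of_nat) (simp add: Q_def R_def power_mult)
qed

lemma dL_i_replicate: "dL a d q i g (replicate b i) = qint (Suc b) * g (replicate (Suc b) i)"
proof -
  have "dL a d q i g (replicate b i) = (\<Sum>p\<le>b. Q ^ p * g (replicate (Suc b) i))"
    unfolding dL_def
  proof (rule sum.cong)
    fix p assume "p \<in> {..b}"
    then have "p \<le> b" by simp
    then show "q powi bform a d (sroot i) (wt (take p (replicate b i)))
        * g (take p (replicate b i) @ i # drop p (replicate b i)) = Q ^ p * g (replicate (Suc b) i)"
      by (simp add: min_def q_powi_wt_replicate replicate_insert_at)
  qed simp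
  then show ?thesis by (simp add: qint_def lessThan_Suc_atMost sum_distrib_right)
qed

lemma dL_i_ijword:
  "dL a d q i g (ijword x y)
     = qint (Suc x) * g (ijword (Suc x) y) + Q ^ x * R * qint (Suc y) * g (ijword x (Suc y))"
proof -
  let ?F = "\<lambda>p. q powi bform a d (sroot i) (wt (take p (ijword x y)))
                 * g (take p (ijword x y) @ i # drop p (ijword x y))"
  have "dL a d q i g (ijword x y) = (\<Sum>p\<le>x + Suc y. ?F p)"
    unfolding dL_def by simp
  also have "\<dots> = (\<Sum>p\<le>x. ?F p) + (\<Sum>t\<le>y. ?F (Suc x + t))"
    by (rule sum_atMost_add_Suc)
  also have "(\<Sum>p\<le>x. ?F p) = (\<Sum>p\<le>x. Q ^ p * g (ijword (Suc x) y))"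
  proof (rule sum.cong)
    fix p assume "p \<in> {..x}"
    then have "p \<le> x" by simp
    then have "take p (ijword x y) = replicate p i"
      and "drop p (ijword x y) = ijword (x - p) y"
      and "replicate p i @ i # ijword (x - p) y = ijword (Suc x) y"
      using replicate_insert_at[OF \<open>p \<le> x\<close>, of i] by (simp_all add: min_def)
    then show "?F p = Q ^ p * g (ijword (Suc x) y)"
      by (simp only: q_powi_wt_replicate)
  qed simp
  also have "(\<Sum>t\<le>y. ?F (Suc x + t)) = (\<Sum>t\<le>y. Q ^ x * R * Q ^ t * g (ijword x (Suc y)))"
  proof (rule sum.cong)
    fix t assume "t \<in> {..y}"
    then have "t \<le> y" by simp
    then have "take (Suc x + t) (ijword x y) = ijword x t"
      and "drop (Suc x + t) (ijword x y) = replicate (y - t) i"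
      and "ijword x t @ i # replicate (y - t) i = ijword x (Suc y)"
      using replicate_insert_at[OF \<open>t \<le> y\<close>, of i] by (simp_all add: min_def)
    then show "?F (Suc x + t) = Q ^ x * R * Q ^ t * g (ijword x (Suc y))"
      by (simp only: q_powi_wt_ijword)
  qed simp
  finally show ?thesis
    by (simp add: qint_def lessThan_Suc_atMost sum_distrib_left sum_distrib_right mult.assoc)
qed

end

section \<open>Coordinates on the span of the words F_i^x F_j F_i^y\<close>

abbreviation coeff2 :: "'a::zero poly poly \<Rightarrow> nat \<Rightarrow> nat \<Rightarrow> 'a" where
  "coeff2 w r s \<equiv> coeff (coeff w r) s"

lemma degree_coeff_le_bound: "\<exists>N. \<forall>r. degree (coeff w r) \<le> N"
proof (intro exI allI)
  fix r
  show "degree (coeff w r) \<le> (\<Sum>r\<le>degree w. degree (coeff w r))"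
    by (cases "r \<le> degree w") (auto intro: member_le_sum simp: coeff_eq_0)
qed

definition delta1 :: "nat \<Rightarrow> nat \<Rightarrow> 'a::zero_neq_one" where
  "delta1 n y = (if y = n then 1 else 0)"

definition delta2 :: "nat \<Rightarrow> nat \<Rightarrow> nat \<Rightarrow> nat \<Rightarrow> 'a::zero_neq_one" where
  "delta2 m n x y = (if x = m \<and> y = n then 1 else 0)"

context ij_setting
begin

(* X = \<Sum> g b F_i^b, resp. X = \<Sum> f x y F_i^x F_j F_i^y, with all K-weights zero. *)

definition has_coords1 :: "(('i \<Rightarrow> int) \<Rightarrow> 'i list \<Rightarrow> 'k) \<Rightarrow> (nat \<Rightarrow> 'k) \<Rightarrow> bool" where
  "has_coords1 X g \<longleftrightarrow> (\<forall>b. X (\<lambda>_. 0) (replicate b i) = g b)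
     \<and> (\<forall>nu u. nu \<noteq> (\<lambda>_. 0) \<or> \<not> set u \<subseteq> {i} \<longrightarrow> X nu u = 0)"

definition has_coords2 :: "(('i \<Rightarrow> int) \<Rightarrow> 'i list \<Rightarrow> 'k) \<Rightarrow> (nat \<Rightarrow> nat \<Rightarrow> 'k) \<Rightarrow> bool" where
  "has_coords2 X f \<longleftrightarrow> (\<forall>x y. X (\<lambda>_. 0) (ijword x y) = f x y)
     \<and> (\<forall>nu u. nu \<noteq> (\<lambda>_. 0) \<or> \<not> is_ijword u \<longrightarrow> X nu u = 0)"

definition mulFi1 :: "(nat \<Rightarrow> 'k) \<Rightarrow> nat \<Rightarrow> 'k" where
  "mulFi1 g b = (case b of 0 \<Rightarrow> 0 | Suc b' \<Rightarrow> g b') - C * qint (Suc b) * g (Suc b)"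

definition mulFi2 :: "(nat \<Rightarrow> nat \<Rightarrow> 'k) \<Rightarrow> nat \<Rightarrow> nat \<Rightarrow> 'k" where
  "mulFi2 f x y = (case x of 0 \<Rightarrow> 0 | Suc x' \<Rightarrow> f x' y)
     - C * (qint (Suc x) * f (Suc x) y + Q ^ x * R * qint (Suc y) * f x (Suc y))"

lemma starF_i_eq:
  "starF a d q c \<tau> i X
     = (\<lambda>nu u. q powi (bform a d nu (sroot i)) * (Fmul i (X nu) u - C * dL a d q i (X nu) u))"
proof -
  have weight: "q powi bform a d (sroot i) (sroot i) = Q"
    using q_powi_wt_replicate[of 1] by (simp add: sroot_eq_wt)
  have shift: "nu - (sroot i - sroot i) = nu" for nu :: "'i \<Rightarrow> int"
    by (simp add: fun_eq_iff)
  show ?thesis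
    unfolding starF_def Let_def tau_i shift weight by (simp add: C_def fun_eq_iff algebra_simps)
qed

lemma starF_i_zero_weight:
  "starF a d q c \<tau> i X (\<lambda>_. 0) u = Fmul i (X (\<lambda>_. 0)) u - C * dL a d q i (X (\<lambda>_. 0)) u"
  by (simp add: starF_i_eq)

lemma starF_i_vanish: "X nu = (\<lambda>_. 0) \<Longrightarrow> starF a d q c \<tau> i X nu u = 0"
  by (cases u) (simp_all add: starF_i_eq dL_def)

lemma starF_i_coords1: "has_coords1 X g \<Longrightarrow> has_coords1 (starF a d q c \<tau> i X) (mulFi1 g)"
proof -
  assume "has_coords1 X g"
  then have X0: "X (\<lambda>_. 0) (replicate b i) = g b"
    and vanish: "\<And>nu u. nu \<noteq> (\<lambda>_. 0) \<or> \<not> set u \<subseteq> {i} \<Longrightarrow> X nu u = 0" for b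
    unfolding has_coords1_def by blast+
  have "Fmul i (X (\<lambda>_. 0)) (replicate b i) = (case b of 0 \<Rightarrow> 0 | Suc b' \<Rightarrow> g b')" for b
    by (cases b) (simp_all add: X0)
  then have coords: "starF a d q c \<tau> i X (\<lambda>_. 0) (replicate b i) = mulFi1 g b" for b
    using X0[of "Suc b"] by (simp add: starF_i_zero_weight dL_i_replicate X0 mulFi1_def)
  have "starF a d q c \<tau> i X nu u = 0" if "nu \<noteq> (\<lambda>_. 0) \<or> \<not> set u \<subseteq> {i}" for nu u
  proof (cases "nu = (\<lambda>_. 0)")
    case True
    with that have u: "\<not> set u \<subseteq> {i}" by simp
    then have "Fmul i (X (\<lambda>_. 0)) u = 0"
      by (cases u) (simp_all add: vanish)
    moreover have "dL a d q i (X (\<lambda>_. 0)) u = 0"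
      using u by (intro dL_eq_0 vanish) (simp only: set_insert_at, simp)
    ultimately show ?thesis using True by (simp add: starF_i_zero_weight)
  qed (simp add: vanish fun_eq_iff starF_i_vanish)
  with coords show ?thesis unfolding has_coords1_def by blast
qed

lemma starF_j_coords1:
  "has_coords1 X g \<Longrightarrow> has_coords2 (starF a d q c \<tau> j X) (\<lambda>x y. if x = 0 then g y else 0)"
proof -
  assume "has_coords1 X g"
  then have X0: "X (\<lambda>_. 0) (replicate b i) = g b"
    and vanish: "\<And>nu u. nu \<noteq> (\<lambda>_. 0) \<or> \<not> set u \<subseteq> {i} \<Longrightarrow> X nu u = 0" for b
    unfolding has_coords1_def by blast+
  have "dL a d q (\<tau> j) (X mu) u = 0" for mu u
    using tau_j by (intro dL_eq_0 vanish) (simp add: set_insert_at)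
  then have starF_j: "starF a d q c \<tau> j X nu u = q powi (bform a d nu (sroot j)) * Fmul j (X nu) u"
    for nu u by (simp add: starF_def Let_def)
  have coords: "starF a d q c \<tau> j X (\<lambda>_. 0) (ijword x y) = (if x = 0 then g y else 0)" for x y
    using ij by (cases x) (simp_all add: starF_j X0)
  have "starF a d q c \<tau> j X nu u = 0" if "nu \<noteq> (\<lambda>_. 0) \<or> \<not> is_ijword u" for nu u
  proof (cases "nu = (\<lambda>_. 0)")
    case True
    with that have u: "\<not> is_ijword u" by simp
    have "Fmul j (X (\<lambda>_. 0)) u = 0"
    proof (cases u)
      case (Cons l w)
      have "\<not> set w \<subseteq> {i}" if "l = j"
      proof
        assume "set w \<subseteq> {i}"
        then have "u = ijword 0 (length w)"
          using Cons \<open>l = j\<close> by (simp add: replicate_length_same subset_iff)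
        with u show False using is_ijword_iff by blast
      qed
      with Cons show ?thesis by (auto intro: vanish)
    qed simp
    with True show ?thesis by (simp add: starF_j)
  qed (cases u; simp add: starF_j vanish)
  with coords show ?thesis unfolding has_coords2_def by blast
qed

lemma starF_i_coords2: "has_coords2 X f \<Longrightarrow> has_coords2 (starF a d q c \<tau> i X) (mulFi2 f)"
proof -
  assume "has_coords2 X f"
  then have X0: "X (\<lambda>_. 0) (ijword x y) = f x y"
    and vanish: "\<And>nu u. nu \<noteq> (\<lambda>_. 0) \<or> \<not> is_ijword u \<Longrightarrow> X nu u = 0" for x y
    unfolding has_coords2_def by blast+
  have "Fmul i (X (\<lambda>_. 0)) (ijword x y) = (case x of 0 \<Rightarrow> 0 | Suc x' \<Rightarrow> f x' y)" for x y
    using ij by (cases x) (simp_all add: X0)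
  then have coords: "starF a d q c \<tau> i X (\<lambda>_. 0) (ijword x y) = mulFi2 f x y" for x y
    using X0[of "Suc x" y] X0[of x "Suc y"]
    by (simp add: starF_i_zero_weight dL_i_ijword mulFi2_def)
  have "starF a d q c \<tau> i X nu u = 0" if "nu \<noteq> (\<lambda>_. 0) \<or> \<not> is_ijword u" for nu u
  proof (cases "nu = (\<lambda>_. 0)")
    case True
    with that have u: "\<not> is_ijword u" by simp
    have "Fmul i (X (\<lambda>_. 0)) u = 0"
    proof (cases u)
      case (Cons l w)
      with u show ?thesis by (cases "l = i") (simp_all add: is_ijword_Cons_i vanish)
    qed simp
    moreover have "dL a d q i (X (\<lambda>_. 0)) u = 0"
      using u by (intro dL_eq_0 vanish) (simp add: is_ijword_insert_i)
    ultimately show ?thesis using True by (simp add: starF_i_zero_weight)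
  qed (simp add: vanish fun_eq_iff starF_i_vanish)
  with coords show ?thesis unfolding has_coords2_def by blast
qed

lemma oneA_coords1: "has_coords1 oneA (delta1 0)"
  by (auto simp: has_coords1_def oneA_def basisA_def delta1_def)

lemma basisA_coords2: "has_coords2 (basisA (\<lambda>_. 0) (ijword m n)) (delta2 m n)"
  using ij by (auto simp: has_coords2_def basisA_def delta2_def ijword_eq_iff is_ijword_iff)

lemma has_coords2_unique:
  assumes "has_coords2 X f" "has_coords2 Y f"
  shows "X = Y"
proof (intro ext)
  fix nu u
  show "X nu u = Y nu u"
  proof (cases "nu = (\<lambda>_. 0) \<and> is_ijword u")
    case True
    then obtain x y where "nu = (\<lambda>_. 0)" "u = ijword x y"
      using is_ijword_iff by blast
    with assms show ?thesis unfolding has_coords2_def by simp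
  qed (use assms in \<open>simp add: has_coords2_def\<close>)
qed

lemma has_coords2_coords_unique: "has_coords2 X f \<Longrightarrow> has_coords2 X g \<Longrightarrow> f = g"
  unfolding has_coords2_def by (simp add: fun_eq_iff)

lemma has_coords2_sum:
  assumes "\<And>r s. has_coords2 (Z r s) (F r s)"
  shows "has_coords2 (\<lambda>nu u. \<Sum>r\<in>A. \<Sum>s\<in>B r. k r s * Z r s nu u)
           (\<lambda>x y. \<Sum>r\<in>A. \<Sum>s\<in>B r. k r s * F r s x y)"
  using assms unfolding has_coords2_def by simp

definition Fi_pow_coords :: "nat \<Rightarrow> nat \<Rightarrow> 'k" where
  "Fi_pow_coords s = (mulFi1 ^^ s) (delta1 0)"

definition monomial_coords :: "nat \<Rightarrow> nat \<Rightarrow> nat \<Rightarrow> nat \<Rightarrow> 'k" where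
  "monomial_coords r s = (mulFi2 ^^ r) (\<lambda>x y. if x = 0 then Fi_pow_coords s y else 0)"

lemma starWord_coords: "has_coords2 (starWord a d q c \<tau> i j r s) (monomial_coords r s)"
proof -
  have Fi_pow: "has_coords1 ((starF a d q c \<tau> i ^^ s') oneA) (Fi_pow_coords s')" for s'
    by (induction s') (simp_all add: Fi_pow_coords_def oneA_coords1 starF_i_coords1)
  have "has_coords2 ((starF a d q c \<tau> i ^^ r) (starF a d q c \<tau> j ((starF a d q c \<tau> i ^^ s) oneA)))
      (monomial_coords r s)"
    by (induction r) (simp_all add: monomial_coords_def starF_j_coords1[OF Fi_pow] starF_i_coords2)
  then show ?thesis by (simp add: starWord_def)
qed

lemma monomial_coords_0: "monomial_coords 0 s x y = (if x = 0 then Fi_pow_coords s y else 0)"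
  by (simp add: monomial_coords_def)

lemma Fi_pow_coords_top: "s \<le> b \<Longrightarrow> Fi_pow_coords s b = delta1 s b"
proof (induction s arbitrary: b)
  case (Suc s)
  then obtain b' where b: "b = Suc b'" "s \<le> b'" by (cases b) auto
  with Suc.IH[of "Suc (Suc b')"] Suc.IH[of b'] show ?case
    by (simp add: Fi_pow_coords_def mulFi1_def delta1_def)
qed (simp add: Fi_pow_coords_def)

lemma monomial_coords_top: "r + s \<le> x + y \<Longrightarrow> monomial_coords r s x y = delta2 r s x y"
proof (induction r arbitrary: x y)
  case 0
  then show ?case by (simp add: monomial_coords_0 Fi_pow_coords_top delta1_def delta2_def)
next
  case (Suc r)
  then have "monomial_coords r s (Suc x) y = 0" "monomial_coords r s x (Suc y) = 0"
    using Suc.IH[of "Suc x" y] Suc.IH[of x "Suc y"] by (simp_all add: delta2_def)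
  moreover have "monomial_coords r s x' y = delta2 r s x' y" if "x = Suc x'" for x'
    using Suc.IH[of x' y] Suc.prems that by simp
  ultimately show ?case
    by (cases x) (simp_all add: monomial_coords_def mulFi2_def delta2_def)
qed

definition expand_coords1 :: "nat \<Rightarrow> 'k poly \<Rightarrow> nat \<Rightarrow> 'k" where
  "expand_coords1 N v y = (\<Sum>s\<le>N. coeff v s * Fi_pow_coords s y)"

definition expand_coords2 :: "nat \<Rightarrow> 'k poly poly \<Rightarrow> nat \<Rightarrow> nat \<Rightarrow> 'k" where
  "expand_coords2 N w x y = (\<Sum>r\<le>N. \<Sum>s\<le>N. coeff2 w r s * monomial_coords r s x y)"

lemma coeff2_eq_0_if_expand_coords2_eq_0:
  assumes zero: "\<And>x y. expand_coords2 N w x y = 0" and "r \<le> N" "s \<le> N"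
  shows "coeff2 w r s = 0"
proof (rule ccontr)
  (* Evaluate at a nonzero coefficient of largest total degree r0 + s0: by monomial_coords_top
     no other coefficient contributes there. *)
  assume "coeff2 w r s \<noteq> 0"
  define P where "P = (\<lambda>(r, s). r \<le> N \<and> s \<le> N \<and> coeff2 w r s \<noteq> 0)"
  have "P (r, s)" using \<open>coeff2 w r s \<noteq> 0\<close> assms by (simp add: P_def)
  then obtain r0 s0 where P0: "P (r0, s0)" and top: "\<And>r' s'. P (r', s') \<Longrightarrow> r' + s' \<le> r0 + s0"
    using ex_has_greatest_nat[of P "(r, s)" "\<lambda>(r, s). r + s" "Suc (N + N)"]
    by (force simp: P_def)
  have "coeff2 w r' s' * monomial_coords r' s' r0 s0
      = (if r' = r0 \<and> s' = s0 then coeff2 w r0 s0 else 0)"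
    if "r' \<le> N" "s' \<le> N" for r' s'
    using top[of r' s'] that monomial_coords_top[of r' s' r0 s0]
    by (cases "coeff2 w r' s' = 0") (auto simp: P_def delta2_def)
  then have "expand_coords2 N w r0 s0
      = (\<Sum>r'\<le>N. \<Sum>s'\<le>N. if r' = r0 \<and> s' = s0 then coeff2 w r0 s0 else 0)"
    unfolding expand_coords2_def by (intro sum.cong) auto
  also have "\<dots> = (\<Sum>r'\<le>N. if r' = r0 then coeff2 w r0 s0 else 0)"
    using P0 by (intro sum.cong) (auto simp: P_def)
  also have "\<dots> = coeff2 w r0 s0"
    using P0 by (simp add: P_def)
  finally show False using zero P0 by (simp add: P_def)
qed

lemma mulFi1_sum:
  "mulFi1 (\<lambda>y. \<Sum>s\<in>B. k s * G s y) y = (\<Sum>s\<in>B. k s * mulFi1 (G s) y)"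
  by (cases y) (simp_all add: mulFi1_def right_diff_distrib sum_subtractf sum_negf
      sum_distrib_left mult.left_commute)

lemma mulFi2_sum:
  "mulFi2 (\<lambda>x y. \<Sum>r\<in>A. \<Sum>s\<in>B. k r s * G r s x y) x y
     = (\<Sum>r\<in>A. \<Sum>s\<in>B. k r s * mulFi2 (G r s) x y)"
  by (cases x) (simp_all add: mulFi2_def right_diff_distrib distrib_left sum_subtractf sum_negf
      sum.distrib sum_distrib_left mult.left_commute)

lemma expand_coords1_pCons:
  assumes "coeff v N = 0"
  shows "expand_coords1 N (pCons 0 v) y = mulFi1 (expand_coords1 N v) y"
proof (cases N)
  case 0
  with assms show ?thesis by (cases y) (simp_all add: expand_coords1_def mulFi1_def)
next
  case (Suc N')
  have "expand_coords1 N (pCons 0 v) y = (\<Sum>s\<le>N'. coeff v s * mulFi1 (Fi_pow_coords s) y)"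
    unfolding expand_coords1_def Suc by (subst sum.atMost_Suc_shift) (simp add: Fi_pow_coords_def)
  also have "\<dots> = mulFi1 (\<lambda>y. \<Sum>s\<le>N'. coeff v s * Fi_pow_coords s y) y"
    by (rule mulFi1_sum[symmetric])
  also have "(\<lambda>y. \<Sum>s\<le>N'. coeff v s * Fi_pow_coords s y) = expand_coords1 N v"
    using assms Suc by (simp add: expand_coords1_def fun_eq_iff)
  finally show ?thesis .
qed

lemma expand_coords2_pCons:
  assumes "\<And>s. coeff2 w N s = 0"
  shows "expand_coords2 N (pCons 0 w) x y = mulFi2 (expand_coords2 N w) x y"
proof (cases N)
  case 0
  with assms show ?thesis by (cases x) (simp_all add: expand_coords2_def mulFi2_def)
next
  case (Suc N')
  have "expand_coords2 N (pCons 0 w) x y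
      = (\<Sum>r\<le>N'. \<Sum>s\<le>N. coeff2 w r s * mulFi2 (monomial_coords r s) x y)"
    unfolding expand_coords2_def Suc by (subst sum.atMost_Suc_shift) (simp add: monomial_coords_def)
  also have "\<dots> = mulFi2 (\<lambda>x y. \<Sum>r\<le>N'. \<Sum>s\<le>N. coeff2 w r s * monomial_coords r s x y) x y"
    by (rule mulFi2_sum[symmetric])
  also have "(\<lambda>x y. \<Sum>r\<le>N'. \<Sum>s\<le>N. coeff2 w r s * monomial_coords r s x y) = expand_coords2 N w"
    using assms Suc by (simp add: expand_coords2_def fun_eq_iff)
  finally show ?thesis .
qed

lemma expand_coords1_add: "expand_coords1 N (u + v) y = expand_coords1 N u y + expand_coords1 N v y"
  by (simp add: expand_coords1_def algebra_simps sum.distrib)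

lemma expand_coords1_smult: "expand_coords1 N (smult k v) y = k * expand_coords1 N v y"
  by (simp add: expand_coords1_def sum_distrib_left mult.assoc)

lemma expand_coords2_add:
  "expand_coords2 N (w + v) x y = expand_coords2 N w x y + expand_coords2 N v x y"
  by (simp add: expand_coords2_def algebra_simps sum.distrib)

lemma expand_coords2_diff:
  "expand_coords2 N (w - v) x y = expand_coords2 N w x y - expand_coords2 N v x y"
  by (simp add: expand_coords2_def algebra_simps sum_subtractf)

lemma expand_coords2_smult: "expand_coords2 N (smult [:k:] w) x y = k * expand_coords2 N w x y"
  by (simp add: expand_coords2_def sum_distrib_left mult.assoc)

lemma mulFi1_delta1:
  "mulFi1 (delta1 n) y = delta1 (Suc n) y - C * qint n * delta1 (n - 1) y"
  by (cases y; cases n) (auto simp: mulFi1_def delta1_def qint_def)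

lemma mulFi2_delta2:
  "mulFi2 (delta2 m n) x y = delta2 (Suc m) n x y - C * qint m * delta2 (m - 1) n x y
     - C * Q ^ m * R * qint n * delta2 m (n - 1) x y"
  by (cases x; cases m; cases n) (auto simp: mulFi2_def delta2_def qint_def)

end

section \<open>The polynomials w_(m,n)\<close>

context ij_setting
begin

(* The truncated subtractions m - 1, n - 1 are harmless: their coefficients contain qint 0 = 0. *)

fun Vpoly :: "nat \<Rightarrow> 'k poly" where
  "Vpoly 0 = 1"
| "Vpoly (Suc n) = pCons 0 (Vpoly n) + smult (C * qint n) (Vpoly (n - 1))"

fun Wpoly :: "nat \<Rightarrow> nat \<Rightarrow> 'k poly poly" where
  "Wpoly 0 n = [:Vpoly n:]"
| "Wpoly (Suc m) n = pCons 0 (Wpoly m n) + smult [:C * qint m:] (Wpoly (m - 1) n)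
     + smult [:C * Q ^ m * R * qint n:] (Wpoly m (n - 1))"

lemma degree_Vpoly: "degree (Vpoly n) \<le> n"
  by (induction n rule: Vpoly.induct)
    (auto intro!: degree_add_le le_trans[OF degree_smult_le] simp: degree_pCons_eq_if)

lemma degree_Wpoly: "degree (Wpoly m n) \<le> m"
  by (induction m n rule: Wpoly.induct)
    (auto intro!: degree_add_le le_trans[OF degree_smult_le] simp: degree_pCons_eq_if)

lemma degree_coeff_Wpoly: "degree (coeff (Wpoly m n) r) \<le> n"
proof (induction m n arbitrary: r rule: Wpoly.induct)
  case (1 n)
  then show ?case using degree_Vpoly by (simp add: coeff_pCons split: nat.split)
next
  case (2 m n)
  moreover have "degree (coeff (Wpoly m (n - 1)) r') \<le> n" for r'
    using "2.IH"(3)[of r'] by linarith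
  ultimately show ?case
    by (auto simp: coeff_pCons split: nat.split
        intro!: degree_add_le le_trans[OF degree_smult_le])
qed

lemma coeff_Vpoly_Suc:
  "coeff (Vpoly (Suc n)) s = (case s of 0 \<Rightarrow> 0 | Suc s' \<Rightarrow> coeff (Vpoly n) s')
     + C * qint n * coeff (Vpoly (n - 1)) s"
  by (simp add: coeff_pCons)

lemma coeff2_Wpoly_Suc:
  "coeff2 (Wpoly (Suc m) n) r s = (case r of 0 \<Rightarrow> 0 | Suc r' \<Rightarrow> coeff2 (Wpoly m n) r' s)
     + C * qint m * coeff2 (Wpoly (m - 1) n) r s
     + C * Q ^ m * R * qint n * coeff2 (Wpoly m (n - 1)) r s"
  by (simp add: coeff_pCons split: nat.split)

lemma expand_coords1_Vpoly: "n < N \<Longrightarrow> expand_coords1 N (Vpoly n) = delta1 n"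
proof (induction n rule: Vpoly.induct)
  case 1
  then show ?case by (simp add: fun_eq_iff expand_coords1_def coeff_1 Fi_pow_coords_def)
next
  case (2 n)
  then have IH: "expand_coords1 N (Vpoly n) = delta1 n"
    "expand_coords1 N (Vpoly (n - 1)) = delta1 (n - 1)"
    by simp_all
  have top: "coeff (Vpoly n) N = 0"
    using degree_Vpoly[of n] "2.prems" by (simp add: coeff_eq_0)
  show ?case
    by (simp add: fun_eq_iff expand_coords1_add expand_coords1_smult expand_coords1_pCons[OF top]
        IH[simplified] mulFi1_delta1)
qed

lemma expand_coords2_Wpoly: "m + n < N \<Longrightarrow> expand_coords2 N (Wpoly m n) = delta2 m n"
proof (induction m n rule: Wpoly.induct)
  case (1 n)
  have "expand_coords2 N (Wpoly 0 n) x y = (if x = 0 then expand_coords1 N (Vpoly n) y else 0)"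
    for x y by (simp add: expand_coords2_def expand_coords1_def monomial_coords_0 sum.atMost_shift)
  with 1 show ?case by (simp add: fun_eq_iff expand_coords1_Vpoly delta1_def delta2_def)
next
  case (2 m n)
  then have IH: "expand_coords2 N (Wpoly m n) = delta2 m n"
    "expand_coords2 N (Wpoly (m - 1) n) = delta2 (m - 1) n"
    "expand_coords2 N (Wpoly m (n - 1)) = delta2 m (n - 1)"
    by simp_all
  have top: "coeff2 (Wpoly m n) N s = 0" for s
    using degree_Wpoly[of m n] "2.prems" by (simp add: coeff_eq_0)
  show ?case
    by (simp add: fun_eq_iff expand_coords2_add expand_coords2_smult expand_coords2_pCons[OF top]
        IH[simplified] mulFi2_delta2)
qed

lemma expandA_coords:
  assumes "degree w \<le> N" "\<And>r. degree (coeff w r) \<le> N"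
  shows "has_coords2 (expandA a d q c \<tau> i j w) (expand_coords2 N w)"
proof -
  have "expandA a d q c \<tau> i j w
      = (\<lambda>nu u. \<Sum>r\<le>N. \<Sum>s\<le>N. coeff2 w r s * starWord a d q c \<tau> i j r s nu u)"
  proof (intro ext)
    fix nu u
    let ?S = "\<lambda>r s. coeff2 w r s * starWord a d q c \<tau> i j r s nu u"
    have "(\<Sum>s\<le>degree (coeff w r). ?S r s) = (\<Sum>s\<le>N. ?S r s)" for r
      using assms(2)[of r] by (intro sum.mono_neutral_left) (auto simp: coeff_eq_0)
    moreover have "(\<Sum>r\<le>degree w. \<Sum>s\<le>N. ?S r s) = (\<Sum>r\<le>N. \<Sum>s\<le>N. ?S r s)"
      using assms(1) by (intro sum.mono_neutral_left) (auto simp: coeff_eq_0)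
    ultimately show "expandA a d q c \<tau> i j w nu u = (\<Sum>r\<le>N. \<Sum>s\<le>N. ?S r s)"
      by (simp add: expandA_def)
  qed
  then show ?thesis
    unfolding expand_coords2_def by (simp add: has_coords2_sum starWord_coords)
qed

lemma expandA_eq_basisA_iff:
  "expandA a d q c \<tau> i j w = basisA (\<lambda>_. 0) (ijword m n) \<longleftrightarrow> w = Wpoly m n"
proof -
  obtain B where B: "\<And>r. degree (coeff w r) \<le> B"
    using degree_coeff_le_bound by blast
  define N where "N = degree w + B + Suc (m + n)"
  have w_N: "degree w \<le> N" "\<And>r. degree (coeff w r) \<le> N"
    using B[THEN le_trans] by (simp_all add: N_def)
  have W_N: "degree (Wpoly m n) \<le> N" "\<And>r. degree (coeff (Wpoly m n) r) \<le> N"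
    using degree_Wpoly[of m n, THEN le_trans] degree_coeff_Wpoly[of m n, THEN le_trans]
    by (simp_all add: N_def)
  have W: "has_coords2 (expandA a d q c \<tau> i j (Wpoly m n)) (delta2 m n)"
    using expandA_coords[OF W_N] expand_coords2_Wpoly[of m n N] by (simp add: N_def)
  show ?thesis
  proof
    assume "expandA a d q c \<tau> i j w = basisA (\<lambda>_. 0) (ijword m n)"
    then have "expand_coords2 N w = delta2 m n"
      using expandA_coords[OF w_N] basisA_coords2 has_coords2_coords_unique by metis
    then have zero: "expand_coords2 N (w - Wpoly m n) x y = 0" for x y
      using expand_coords2_Wpoly[of m n N] by (simp add: expand_coords2_diff N_def)
    have "coeff2 w r s = coeff2 (Wpoly m n) r s" for r s
    proof (cases "r \<le> N \<and> s \<le> N")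
      case True
      then have "coeff2 (w - Wpoly m n) r s = 0"
        using coeff2_eq_0_if_expand_coords2_eq_0[OF zero] by blast
      then show ?thesis by simp
    next
      case False
      have "coeff2 v r s = 0" if "degree v \<le> N" "\<And>r. degree (coeff v r) \<le> N"
        for v :: "'k poly poly"
        using False that by (metis coeff_0 coeff_eq_0 le_less_trans not_le)
      with w_N W_N show ?thesis by metis
    qed
    then show "w = Wpoly m n" by (simp add: poly_eq_iff)
  next
    assume "w = Wpoly m n"
    with W basisA_coords2 show "expandA a d q c \<tau> i j w = basisA (\<lambda>_. 0) (ijword m n)"
      using has_coords2_unique by blast
  qed
qed

end

section \<open>Comparison with the bivariate continuous Hermite polynomials\<close>

lemma coeff_Hpoly_Suc:
  "coeff (Hpoly p (Suc n)) s = 2 * (case s of 0 \<Rightarrow> 0 | Suc s' \<Rightarrow> coeff (Hpoly p n) s')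
     - (1 - p ^ n) * coeff (Hpoly p (n - 1)) s"
  by (cases n; cases s) (auto simp: coeff_pCons split: nat.split)

lemma coeff2_Hbiv_Suc:
  "coeff2 (Hbiv p \<rho> (Suc m) n) r s = 2 * (case r of 0 \<Rightarrow> 0 | Suc r' \<Rightarrow> coeff2 (Hbiv p \<rho> m n) r' s)
     - (1 - p ^ m) * coeff2 (Hbiv p \<rho> (m - 1) n) r s
     - p ^ m * (1 - p ^ n) * \<rho> * coeff2 (Hbiv p \<rho> m (n - 1)) r s"
  by (cases m; cases n; cases r) (auto simp: coeff_pCons split: nat.split)

lemma power_Suc_Suc_mult_2: "(2 * b) ^ Suc (Suc k) = 4 * b ^ 2 * (2 * b) ^ k"
  for b :: "'a::comm_semiring_1"
  by (simp add: power2_eq_square mult_ac)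

locale field_hom =
  fixes \<phi> :: "'k::field \<Rightarrow> 'l::field"
  assumes additive: "\<forall>x y. \<phi> (x + y) = \<phi> x + \<phi> y"
    and multiplicative: "\<forall>x y. \<phi> (x * y) = \<phi> x * \<phi> y"
    and hom_one [simp]: "\<phi> 1 = 1"
begin

lemma hom_add [simp]: "\<phi> (x + y) = \<phi> x + \<phi> y"
  using additive by blast

lemma hom_mult [simp]: "\<phi> (x * y) = \<phi> x * \<phi> y"
  using multiplicative by blast

lemma hom_zero [simp]: "\<phi> 0 = 0"
  by (metis add_0 add_cancel_right_right hom_add)

lemma hom_uminus [simp]: "\<phi> (- x) = - \<phi> x"
  using hom_add[of x "- x"] by (simp add: eq_neg_iff_add_eq_0 add.commute)

lemma hom_diff [simp]: "\<phi> (x - y) = \<phi> x - \<phi> y"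
  using hom_add[of x "- y"] by simp

lemma hom_power [simp]: "\<phi> (x ^ n) = \<phi> x ^ n"
  by (induction n) simp_all

lemma hom_sum [simp]: "\<phi> (\<Sum>x\<in>A. f x) = (\<Sum>x\<in>A. \<phi> (f x))"
  by (induction A rule: infinite_finite_induct) simp_all

lemma hom_of_nat [simp]: "\<phi> (of_nat n) = of_nat n"
  by (induction n) simp_all

lemma hom_numeral [simp]: "\<phi> (numeral n) = numeral n"
  using hom_of_nat[of "numeral n"] by simp

lemma hom_nonzero: "x \<noteq> 0 \<Longrightarrow> \<phi> x \<noteq> 0"
  using hom_mult[of x "inverse x"] by auto

end

locale ij_hermite = ij_setting a d q c \<tau> i j + field_hom \<phi>
  for a :: "'i::finite \<Rightarrow> 'i \<Rightarrow> int" and d :: "'i \<Rightarrow> nat" and q :: "'k::field_char_0"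
    and c :: "'i \<Rightarrow> 'k" and \<tau> :: "'i \<Rightarrow> 'i" and i j :: 'i and \<phi> :: "'k \<Rightarrow> 'l::field" +
  fixes \<beta> :: 'l
  assumes c_i: "c i \<noteq> 0" and q_root: "q ^ (2 * d i) \<noteq> 1"
    and beta_sq: "\<beta> ^ 2 = \<phi> ((q ^ d i - inverse (q ^ d i)) ^ 2 / (4 * c i * q ^ d i))"
begin

lemma C_mult_beta_sq: "\<phi> C * (4 * \<beta> ^ 2) = \<phi> Q - 1"
proof -
  let ?x = "q ^ d i"
  have "?x \<noteq> 0" using q_nz by simp
  moreover have "?x - inverse ?x \<noteq> 0"
    using q_root \<open>?x \<noteq> 0\<close> by (auto simp: power_mult power2_eq_square field_simps mult.commute)
  ultimately have "C * (4 * ((?x - inverse ?x) ^ 2 / (4 * c i * ?x))) = Q - 1"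
    using c_i by (simp add: C_def Q_def power_mult power2_eq_square field_simps mult.commute)
  then have "\<phi> (C * (4 * ((?x - inverse ?x) ^ 2 / (4 * c i * ?x)))) = \<phi> (Q - 1)"
    by (rule arg_cong)
  then show ?thesis by (simp only: hom_mult hom_diff hom_one hom_numeral beta_sq)
qed

lemma beta_nonzero: "\<beta> \<noteq> 0"
  using C_mult_beta_sq q_root hom_nonzero[of "Q - 1"] by (auto simp: Q_def)

lemma C_qint_mult_beta_sq: "\<phi> (C * qint n) * (4 * \<beta> ^ 2) = \<phi> Q ^ n - 1"
proof -
  have "\<phi> (C * qint n) * (4 * \<beta> ^ 2) = (\<phi> C * (4 * \<beta> ^ 2)) * (\<Sum>p<n. \<phi> Q ^ p)"
    by (simp add: qint_def mult_ac)
  then show ?thesis by (simp add: C_mult_beta_sq power_diff_1_eq)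
qed

lemma rescale_Suc:
  "\<phi> v * (2 * \<beta>) ^ k = h * \<beta> ^ e \<Longrightarrow> \<phi> v * (2 * \<beta>) ^ Suc k = 2 * h * \<beta> ^ Suc e"
  by (metis (no_types, lifting) mult.assoc mult.left_commute power_Suc)

lemma rescale_Suc_Suc:
  assumes "\<phi> K * (4 * \<beta> ^ 2) = E" and "\<phi> v * (2 * \<beta>) ^ k = h * \<beta> ^ e"
  shows "\<phi> (K * v) * (2 * \<beta>) ^ Suc (Suc k) = E * h * \<beta> ^ e"
proof -
  have "\<phi> (K * v) * (2 * \<beta>) ^ Suc (Suc k) = (\<phi> K * (4 * \<beta> ^ 2)) * (\<phi> v * (2 * \<beta>) ^ k)"
    by (simp only: hom_mult power_Suc_Suc_mult_2) (simp only: mult_ac)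
  also have "\<dots> = E * h * \<beta> ^ e"
    by (simp only: assms mult.assoc)
  finally show ?thesis .
qed

lemma Vpoly_hermite:
  "\<phi> (coeff (Vpoly n) s) * (2 * \<beta>) ^ n = coeff (Hpoly (\<phi> Q) n) s * \<beta> ^ s"
proof (induction n arbitrary: s rule: Vpoly.induct)
  case 1
  then show ?case by (simp add: coeff_1)
next
  case (2 n)
  let ?H = "\<lambda>n s. coeff (Hpoly (\<phi> Q) n) s"
  have shift: "\<phi> (case s of 0 \<Rightarrow> 0 | Suc s' \<Rightarrow> coeff (Vpoly n) s') * (2 * \<beta>) ^ Suc n
      = 2 * (case s of 0 \<Rightarrow> 0 | Suc s' \<Rightarrow> ?H n s') * \<beta> ^ s"
    by (cases s) (simp, simp only: nat.case rescale_Suc[OF "2.IH"(1)])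
  have lower: "\<phi> (C * qint n * coeff (Vpoly (n - 1)) s) * (2 * \<beta>) ^ Suc n
      = (\<phi> Q ^ n - 1) * ?H (n - 1) s * \<beta> ^ s"
  proof (cases n)
    case (Suc n')
    from rescale_Suc_Suc[OF C_qint_mult_beta_sq "2.IH"(2)] show ?thesis
      by (simp only: Suc diff_Suc_1)
  qed (simp add: qint_def)
  have "\<phi> (coeff (Vpoly (Suc n)) s) * (2 * \<beta>) ^ Suc n
      = \<phi> (case s of 0 \<Rightarrow> 0 | Suc s' \<Rightarrow> coeff (Vpoly n) s') * (2 * \<beta>) ^ Suc n
        + \<phi> (C * qint n * coeff (Vpoly (n - 1)) s) * (2 * \<beta>) ^ Suc n"
    by (simp only: coeff_Vpoly_Suc hom_add distrib_right)
  also have "\<dots> = ?H (Suc n) s * \<beta> ^ s"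
    by (simp only: shift lower coeff_Hpoly_Suc) (simp add: algebra_simps)
  finally show ?case .
qed

lemma C_Q_R_qint_mult_beta_sq:
  "\<phi> (C * Q ^ m * R * qint n) * (4 * \<beta> ^ 2) = \<phi> Q ^ m * \<phi> R * (\<phi> Q ^ n - 1)"
proof -
  have "\<phi> (C * Q ^ m * R * qint n) * (4 * \<beta> ^ 2) = \<phi> (Q ^ m * R) * (\<phi> (C * qint n) * (4 * \<beta> ^ 2))"
    by (simp only: hom_mult mult_ac)
  also have "\<dots> = \<phi> (Q ^ m * R) * (\<phi> Q ^ n - 1)"
    by (simp only: C_qint_mult_beta_sq)
  finally show ?thesis by (simp only: hom_mult hom_power)
qed

lemma Wpoly_hermite:
  "\<phi> (coeff2 (Wpoly m n) r s) * (2 * \<beta>) ^ (m + n)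
     = coeff2 (Hbiv (\<phi> Q) (\<phi> R) m n) r s * \<beta> ^ (r + s)"
proof (induction m n arbitrary: r s rule: Wpoly.induct)
  case (1 n)
  show ?case using Vpoly_hermite[of n s] by (cases r) simp_all
next
  case (2 m n)
  let ?H = "\<lambda>m n r s. coeff2 (Hbiv (\<phi> Q) (\<phi> R) m n) r s"
  have shift: "\<phi> (case r of 0 \<Rightarrow> 0 | Suc r' \<Rightarrow> coeff2 (Wpoly m n) r' s) * (2 * \<beta>) ^ Suc (m + n)
      = 2 * (case r of 0 \<Rightarrow> 0 | Suc r' \<Rightarrow> ?H m n r' s) * \<beta> ^ (r + s)"
    by (cases r) (simp, simp only: nat.case add_Suc rescale_Suc[OF "2.IH"(1)])
  have lower_m: "\<phi> (C * qint m * coeff2 (Wpoly (m - 1) n) r s) * (2 * \<beta>) ^ Suc (m + n)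
      = (\<phi> Q ^ m - 1) * ?H (m - 1) n r s * \<beta> ^ (r + s)"
  proof (cases m)
    case (Suc m')
    from rescale_Suc_Suc[OF C_qint_mult_beta_sq "2.IH"(2)] show ?thesis
      by (simp only: Suc diff_Suc_1 add_Suc)
  qed (simp add: qint_def)
  have lower_n: "\<phi> (C * Q ^ m * R * qint n * coeff2 (Wpoly m (n - 1)) r s) * (2 * \<beta>) ^ Suc (m + n)
      = \<phi> Q ^ m * \<phi> R * (\<phi> Q ^ n - 1) * ?H m (n - 1) r s * \<beta> ^ (r + s)"
  proof (cases n)
    case (Suc n')
    from rescale_Suc_Suc[OF C_Q_R_qint_mult_beta_sq "2.IH"(3)] show ?thesis
      by (simp only: Suc diff_Suc_1 add_Suc_right)
  qed (simp add: qint_def)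
  have "\<phi> (coeff2 (Wpoly (Suc m) n) r s) * (2 * \<beta>) ^ (Suc m + n)
      = \<phi> (case r of 0 \<Rightarrow> 0 | Suc r' \<Rightarrow> coeff2 (Wpoly m n) r' s) * (2 * \<beta>) ^ Suc (m + n)
        + \<phi> (C * qint m * coeff2 (Wpoly (m - 1) n) r s) * (2 * \<beta>) ^ Suc (m + n)
        + \<phi> (C * Q ^ m * R * qint n * coeff2 (Wpoly m (n - 1)) r s) * (2 * \<beta>) ^ Suc (m + n)"
    by (simp only: coeff2_Wpoly_Suc hom_add distrib_right add_Suc)
  also have "\<dots> = ?H (Suc m) n r s * \<beta> ^ (r + s)"
    by (simp only: shift lower_m lower_n coeff2_Hbiv_Suc) (simp add: algebra_simps)
  finally show ?case .
qed

lemma coeff2_Wpoly_hermite: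
  "\<phi> (coeff2 (Wpoly m n) r s)
     = coeff2 (Hbiv (\<phi> (q ^ d i) ^ 2) (\<phi> ((q ^ d i) powi a i j)) m n) r s
       * \<beta> ^ (r + s) / (2 * \<beta>) ^ (m + n)"
proof -
  have "(2 :: 'l) \<noteq> 0"
    using hom_nonzero[of 2] by simp
  with beta_nonzero have "(2 * \<beta>) ^ (m + n) \<noteq> 0" by simp
  moreover have "\<phi> Q = \<phi> (q ^ d i) ^ 2"
    by (simp add: Q_def mult.commute[of 2] power_mult)
  moreover have "R = (q ^ d i) powi a i j"
    by (simp only: R_def power_int_mult power_int_of_nat)
  ultimately show ?thesis
    using Wpoly_hermite[of m n r s] by (simp add: eq_divide_eq)
qed

end

theorem proposition4p8:
  fixes a :: "'i::finite \<Rightarrow> 'i \<Rightarrow> int" and d :: "'i \<Rightarrow> nat"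
    and q :: "'k::field_char_0" and \<tau> :: "'i \<Rightarrow> 'i" and c :: "'i \<Rightarrow> 'k"
    and i j :: 'i and m n :: nat
    and \<phi> :: "'k \<Rightarrow> 'l::field" and \<beta> :: 'l
  assumes GCM: "is_GCM a"
    and d_pos: "\<forall>k. d k > 0"
    and d_coprime: "Gcd (range d) = 1"
    and d_sym: "\<forall>k l. int (d k) * a k l = int (d l) * a l k"
    and q_nz: "q \<noteq> 0"
    and q_root: "\<forall>k. q ^ (2 * d k) \<noteq> 1"
    and tau_inv: "\<forall>k. \<tau> (\<tau> k) = k"
    and tau_a: "\<forall>k l. a (\<tau> k) (\<tau> l) = a k l"
    and c_nz: "\<forall>k. c k \<noteq> 0"
    and c_tau: "\<forall>k. a k (\<tau> k) = 0 \<longrightarrow> c k = c (\<tau> k)"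
    and tau_i: "\<tau> i = i" and ij: "i \<noteq> j"
    and hom_add: "\<forall>x y. \<phi> (x + y) = \<phi> x + \<phi> y"
    and hom_mult: "\<forall>x y. \<phi> (x * y) = \<phi> x * \<phi> y"
    and hom_one: "\<phi> 1 = 1"
    and beta: "\<beta> ^ 2 = \<phi> ((q ^ d i - inverse (q ^ d i)) ^ 2 / (4 * c i * q ^ d i))"
  shows "(\<exists>!w::'k poly poly. expandA a d q c \<tau> i j w = basisA (\<lambda>_. 0) (replicate m i @ [j] @ replicate n i))
    \<and> (\<forall>w::'k poly poly. expandA a d q c \<tau> i j w = basisA (\<lambda>_. 0) (replicate m i @ [j] @ replicate n i)
         \<longrightarrow> (\<forall>r s. \<phi> (coeff (coeff w r) s)
               = coeff (coeff (Hbiv (\<phi> (q ^ d i) ^ 2) (\<phi> ((q ^ d i) powi (a i j))) m n) r) s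
                 * \<beta> ^ (r + s) / (2 * \<beta>) ^ (m + n)))"
proof -
  (* Only the data at i and j enter. *)
  have "a i i = 2"
    using GCM by (simp add: is_GCM_def)
  moreover have "\<tau> j \<noteq> i"
    using tau_inv tau_i ij by metis
  ultimately interpret ij_hermite a d q c \<tau> i j \<phi> \<beta>
    using tau_i ij q_nz hom_add hom_mult hom_one c_nz q_root beta by unfold_locales auto
  have "expandA a d q c \<tau> i j w = basisA (\<lambda>_. 0) (replicate m i @ [j] @ replicate n i)
      \<longleftrightarrow> w = Wpoly m n" for w
    using expandA_eq_basisA_iff by simp
  then show ?thesis
    using coeff2_Wpoly_hermite by auto
qed

end
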